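(* For every binary decision tree $T$ on $\mathcal X$ in which every node $n$ satisfies $\mathcal I(n)\neq\emptyset$, the cost of the corresponding solution graph $\mathcal S(T)$ satisfies $\mathrm{cost}(\mathcal S(T))=-\log P(T,\mathcal Y\mid\mathcal X)$. Consequently, a minimum-cost solution graph of $\mathcal G_{\mathcal X,\mathcal Y}$ corresponds to a maximum a posteriori tree, i.e. a tree maximizing $P(T\mid\mathcal Y,\mathcal X)\propto P(\mathcal Y\mid\mathcal X,T)P(T\mid\mathcal X)$.
   Context: Let $x_1,\dots,x_N\in\{0,1\}^F$ be a binary dataset $\mathcal X$ with labels $\mathcal Y=(y_1,\dots,y_N)\in\{0,1\}^N$, and $[N]=\{1,\dots,N\}$. For $\mathcal I\subseteq[N]$, $f\in[F]$, $k\in\{0,1\}$ let $\mathcal I|_{f=k}=\{i\in\mathcal I:(x_i)_f=k\}$, $c^k(\mathcal I)=|\{i\in\mathcal I:y_i=k\}|$, and $\mathcal V(\mathcal I)=\{f\in[F]:\mathcal I|_{f=0}\neq\emptyset\text{ and }\mathcal I|_{f=1}\neq\emptyset\}$. Fix $\rho^1,\rho^0>0$, $\alpha\in(0,1)$, $\beta\ge 0$. Let $B$ be the Beta function, $\ell_{\rm leaf}(c^1,c^0)=B(c^1+\rho^1,c^0+\rho^0)/B(\rho^1,\rho^0)$, $p_{\rm split}(d)=\alpha(1+d)^{-\beta}$, $p_{\rm leaf}(d,\mathcal I)=1$ if $\mathcal V(\mathcal I)=\emptyset$ and $1-p_{\rm split}(d)$ otherwise, $p_{\rm inner}(d,\mathcal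 I)=0$ if $\mathcal V(\mathcal I)=\emptyset$ and $p_{\rm split}(d)/|\mathcal V(\mathcal I)|$ otherwise; $-\log 0=+\infty$. The AND/OR graph $\mathcal G_{\mathcal X,\mathcal Y}$: for every nonempty $\mathcal I\subseteq[N]$ and $d\in\{0,\dots,F\}$ there is an OR node $o_{\mathcal I,d}$ and a terminal node $t_{\mathcal I,d}$, with an edge $o_{\mathcal I,d}\to t_{\mathcal I,d}$ of cost $-\log p_{\rm leaf}(d,\mathcal I)-\log\ell_{\rm leaf}(c^1(\mathcal I),c^0(\mathcal I))$. For every such OR node with $d<F$ and every $f\in\mathcal V(\mathcal I)$ there is an AND node $a_{\mathcal I,d,f}$ with an edge $o_{\mathcal I,d}\to a_{\mathcal I,d,f}$ of cost $-\log p_{\rm inner}(d,\mathcal I)$ and edges of cost $0$ from $a_{\mathcal I,d,f}$ to $o_{\mathcal I|_{f=0},d+1}$ and to $o_{\mathcal I|_{f=1},d+1}$. The root is $r=o_{[N],0}$; only nodes reachable from $r$ are kept. A solution graph is a set $\mathcal S$ of nodes with $r\in\mathcal S$, every node of $\mathcal S$ reachable from $r$ inside $\mathcal S$, every AND node of $\mathcal S$ having both children in $\mathcal S$, every OR node of $\mathcal S$ having exactly one child in $\mathcal S$; its cost $\mathrm{cost}(\mathcal S)$ is the sum of the costs of the edges $u\to v$ with $u,v\in\mathcal S$. A binary decision tree $T$ on $\mathcal X$ is a finite rooted tree in which each internal node $m$ is labeled by a feature $f(m)\in[F]$ and has a $0$-child and a $1$-child; $d(n)$ is the depth of node $n$ (root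 depth $0$), $\mathcal I(\mathrm{root})=[N]$ and the $k$-child of $m$ has $\mathcal I(m)|_{f(m)=k}$. The corresponding solution graph is $\mathcal S(T)=\{o_{\mathcal I(n),d(n)}:n\in T\}\cup\{t_{\mathcal I(n),d(n)}:n\text{ leaf}\}\cup\{a_{\mathcal I(m),d(m),f(m)}:m\text{ internal}\}$ (a bijection onto solution graphs). Prior and likelihood: $P(T\mid\mathcal X)=\prod_{l\text{ leaf}}p_{\rm leaf}(d(l),\mathcal I(l))\prod_{m\text{ internal}}p_{\rm inner}(d(m),\mathcal I(m))$, $P(\mathcal Y\mid\mathcal X,T)=\prod_{l\text{ leaf}}\ell_{\rm leaf}(c^1(\mathcal I(l)),c^0(\mathcal I(l)))$ (the marginal likelihood when each leaf has a Bernoulli label distribution with a $\mathrm{Beta}(\rho^1,\rho^0)$ prior on its parameter), and $P(T,\mathcal Y\mid\mathcal X)=P(\mathcal Y\mid\mathcal X,T)P(T\mid\mathcal X)$. *)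

theory Defs
  imports "HOL-Analysis.Analysis" "HOL-Library.Extended_Real"
begin

(* Dataset: x i f = (x_i)_f for i in {1..N}, f in {1..F}; y i = (y_i = 1).
   Booleans encode {0,1}: False = 0, True = 1. *)

definition restrict_f :: "(nat \<Rightarrow> nat \<Rightarrow> bool) \<Rightarrow> nat set \<Rightarrow> nat \<Rightarrow> bool \<Rightarrow> nat set" where
  "restrict_f x I f k = {i \<in> I. x i f = k}"

definition cnt :: "(nat \<Rightarrow> bool) \<Rightarrow> nat set \<Rightarrow> bool \<Rightarrow> nat" where
  "cnt y I k = card {i \<in> I. y i = k}"

definition splitvars :: "nat \<Rightarrow> (nat \<Rightarrow> nat \<Rightarrow> bool) \<Rightarrow> nat set \<Rightarrow> nat set" where
  "splitvars F x I = {f \<in> {1..F}. restrict_f x I f False \<noteq> {} \<and> restrict_f x I f True \<noteq> {}}"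

definition ell_leaf :: "real \<Rightarrow> real \<Rightarrow> nat \<Rightarrow> nat \<Rightarrow> real" where
  "ell_leaf rho1 rho0 c1 c0 = Beta (real c1 + rho1) (real c0 + rho0) / Beta rho1 rho0"

definition p_split :: "real \<Rightarrow> real \<Rightarrow> nat \<Rightarrow> real" where
  "p_split \<alpha> \<beta> d = \<alpha> * (1 + real d) powr (- \<beta>)"

definition p_leaf :: "nat \<Rightarrow> (nat \<Rightarrow> nat \<Rightarrow> bool) \<Rightarrow> real \<Rightarrow> real \<Rightarrow> nat \<Rightarrow> nat set \<Rightarrow> real" where
  "p_leaf F x \<alpha> \<beta> d I = (if splitvars F x I = {} then 1 else 1 - p_split \<alpha> \<beta> d)"

definition p_inner :: "nat \<Rightarrow> (nat \<Rightarrow> nat \<Rightarrow> bool) \<Rightarrow> real \<Rightarrow> real \<Rightarrow> nat \<Rightarrow> nat set \<Rightarrow> real" where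
  "p_inner F x \<alpha> \<beta> d I = (if splitvars F x I = {} then 0
     else p_split \<alpha> \<beta> d / real (card (splitvars F x I)))"

definition neglog :: "real \<Rightarrow> ereal" where
  "neglog p = (if p = 0 then \<infinity> else ereal (- ln p))"

datatype aonode = OrN "nat set" nat | TermN "nat set" nat | AndN "nat set" nat nat

(* Edges of the (unpruned) AND/OR graph G_{X,Y} *)
fun ao_edge :: "nat \<Rightarrow> nat \<Rightarrow> (nat \<Rightarrow> nat \<Rightarrow> bool) \<Rightarrow> aonode \<Rightarrow> aonode \<Rightarrow> bool" where
  "ao_edge N F x (OrN I d) (TermN J e) =
     (J = I \<and> e = d \<and> I \<noteq> {} \<and> I \<subseteq> {1..N} \<and> d \<le> F)"
| "ao_edge N F x (OrN I d) (AndN J e f) =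
     (J = I \<and> e = d \<and> I \<noteq> {} \<and> I \<subseteq> {1..N} \<and> d < F \<and> f \<in> splitvars F x I)"
| "ao_edge N F x (AndN I d f) (OrN J e) =
     (I \<noteq> {} \<and> I \<subseteq> {1..N} \<and> d < F \<and> f \<in> splitvars F x I \<and> e = d + 1 \<and>
      (J = restrict_f x I f False \<or> J = restrict_f x I f True))"
| "ao_edge N F x u v = False"

fun ao_cost :: "nat \<Rightarrow> (nat \<Rightarrow> nat \<Rightarrow> bool) \<Rightarrow> (nat \<Rightarrow> bool) \<Rightarrow> real \<Rightarrow> real \<Rightarrow> real \<Rightarrow> real
                 \<Rightarrow> aonode \<Rightarrow> aonode \<Rightarrow> ereal" where
  "ao_cost F x y rho1 rho0 \<alpha> \<beta> (OrN I d) (TermN J e) =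
     neglog (p_leaf F x \<alpha> \<beta> d I) + neglog (ell_leaf rho1 rho0 (cnt y I True) (cnt y I False))"
| "ao_cost F x y rho1 rho0 \<alpha> \<beta> (OrN I d) (AndN J e f) = neglog (p_inner F x \<alpha> \<beta> d I)"
| "ao_cost F x y rho1 rho0 \<alpha> \<beta> u v = 0"

definition ao_root :: "nat \<Rightarrow> aonode" where
  "ao_root N = OrN {1..N} 0"

definition G_edge :: "nat \<Rightarrow> nat \<Rightarrow> (nat \<Rightarrow> nat \<Rightarrow> bool) \<Rightarrow> aonode \<Rightarrow> aonode \<Rightarrow> bool" where
  "G_edge N F x u v = (ao_edge N F x u v \<and>
      (ao_root N, u) \<in> {(a, b). ao_edge N F x a b}\<^sup>*)"

definition sg_cost :: "nat \<Rightarrow> nat \<Rightarrow> (nat \<Rightarrow> nat \<Rightarrow> bool) \<Rightarrow> (nat \<Rightarrow> bool) \<Rightarrow> real \<Rightarrow> real \<Rightarrow> real \<Rightarrow> real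
                      \<Rightarrow> aonode set \<Rightarrow> ereal" where
  "sg_cost N F x y rho1 rho0 \<alpha> \<beta> S =
     (\<Sum>(u, v) \<in> {(u, v). u \<in> S \<and> v \<in> S \<and> G_edge N F x u v}. ao_cost F x y rho1 rho0 \<alpha> \<beta> u v)"

(* Binary decision trees: Node f t0 t1 splits on feature f, t0 is the 0-child, t1 the 1-child *)
datatype dtree = Leaf | Node nat dtree dtree

(* tree is a binary decision tree on X (features in [F]) whose nodes all have nonempty I(n);
   I is the index set of the current node *)
fun valid_tree :: "nat \<Rightarrow> (nat \<Rightarrow> nat \<Rightarrow> bool) \<Rightarrow> nat set \<Rightarrow> dtree \<Rightarrow> bool" where
  "valid_tree F x I Leaf = (I \<noteq> {})"
| "valid_tree F x I (Node f t0 t1) = (I \<noteq> {} \<and> f \<in> {1..F} \<and>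
      valid_tree F x (restrict_f x I f False) t0 \<and> valid_tree F x (restrict_f x I f True) t1)"

(* S(T) for the subtree rooted at a node with index set I and depth d *)
fun sgraph :: "(nat \<Rightarrow> nat \<Rightarrow> bool) \<Rightarrow> nat set \<Rightarrow> nat \<Rightarrow> dtree \<Rightarrow> aonode set" where
  "sgraph x I d Leaf = {OrN I d, TermN I d}"
| "sgraph x I d (Node f t0 t1) = {OrN I d, AndN I d f} \<union>
      sgraph x (restrict_f x I f False) (d + 1) t0 \<union> sgraph x (restrict_f x I f True) (d + 1) t1"

(* prior P(T | X) factor of a subtree *)
fun tree_prior :: "nat \<Rightarrow> (nat \<Rightarrow> nat \<Rightarrow> bool) \<Rightarrow> real \<Rightarrow> real \<Rightarrow> nat set \<Rightarrow> nat \<Rightarrow> dtree \<Rightarrow> real" where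
  "tree_prior F x \<alpha> \<beta> I d Leaf = p_leaf F x \<alpha> \<beta> d I"
| "tree_prior F x \<alpha> \<beta> I d (Node f t0 t1) = p_inner F x \<alpha> \<beta> d I *
      tree_prior F x \<alpha> \<beta> (restrict_f x I f False) (d + 1) t0 *
      tree_prior F x \<alpha> \<beta> (restrict_f x I f True) (d + 1) t1"

(* likelihood P(Y | X, T) factor of a subtree *)
fun tree_lik :: "(nat \<Rightarrow> nat \<Rightarrow> bool) \<Rightarrow> (nat \<Rightarrow> bool) \<Rightarrow> real \<Rightarrow> real \<Rightarrow> nat set \<Rightarrow> dtree \<Rightarrow> real" where
  "tree_lik x y rho1 rho0 I Leaf = ell_leaf rho1 rho0 (cnt y I True) (cnt y I False)"
| "tree_lik x y rho1 rho0 I (Node f t0 t1) =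
      tree_lik x y rho1 rho0 (restrict_f x I f False) t0 * tree_lik x y rho1 rho0 (restrict_f x I f True) t1"

definition joint_prob :: "nat \<Rightarrow> nat \<Rightarrow> (nat \<Rightarrow> nat \<Rightarrow> bool) \<Rightarrow> (nat \<Rightarrow> bool) \<Rightarrow> real \<Rightarrow> real \<Rightarrow> real \<Rightarrow> real
                          \<Rightarrow> dtree \<Rightarrow> real" where
  "joint_prob N F x y rho1 rho0 \<alpha> \<beta> T =
     tree_lik x y rho1 rho0 {1..N} T * tree_prior F x \<alpha> \<beta> {1..N} 0 T"

end

theory Submission
  imports Defs
begin

text \<open>The solution graph of a tree \<open>T\<close> contains exactly the edges of \<open>T\<close> itself: an OR-to-terminal
  edge for each leaf, and an OR-to-AND edge followed by AND-to-OR edges to both children for each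
  inner node. Each of them survives the pruning to the part reachable from the root, since the root
  reaches it along \<open>T\<close>. Conversely, an edge of the graph between two nodes of the solution graph
  can only go from a node to a child of it: edges never increase the index set and never decrease
  the depth, and sibling subtrees have disjoint index sets. Summing the edge costs along \<open>T\<close> thus
  yields \<open>-log\<close> of the product of all leaf and inner-node factors, which is \<open>-log P(T, Y | X)\<close>.
  All these factors are positive, so minimal cost is maximal joint probability.\<close>

fun node_index :: "aonode \<Rightarrow> nat set" where
  "node_index (OrN I d) = I"
| "node_index (TermN I d) = I"
| "node_index (AndN I d f) = I"

fun node_depth :: "aonode \<Rightarrow> nat" where
  "node_depth (OrN I d) = d"
| "node_depth (TermN I d) = d"
| "node_depth (AndN I d f) = d"

fun tree_edges :: "(nat \<Rightarrow> nat \<Rightarrow> bool) \<Rightarrow> nat set \<Rightarrow> nat \<Rightarrow> dtree \<Rightarrow> (aonode \<times> aonode) set" where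
  "tree_edges x I d Leaf = {(OrN I d, TermN I d)}"
| "tree_edges x I d (Node f t0 t1) =
     {(OrN I d, AndN I d f),
      (AndN I d f, OrN (restrict_f x I f False) (d + 1)),
      (AndN I d f, OrN (restrict_f x I f True) (d + 1))}
     \<union> tree_edges x (restrict_f x I f False) (d + 1) t0
     \<union> tree_edges x (restrict_f x I f True) (d + 1) t1"

lemma restrict_f_subset: "restrict_f x I f k \<subseteq> I"
  by (auto simp: restrict_f_def)

lemma restrict_f_disjoint: "restrict_f x I f False \<inter> restrict_f x I f True = {}"
  by (auto simp: restrict_f_def)

lemma finite_splitvars: "finite (splitvars F x I)"
  by (simp add: splitvars_def)

lemma card_splitvars_le: "card (splitvars F x I) \<le> F"
proof -
  have "splitvars F x I \<subseteq> {1..F}"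
    unfolding splitvars_def by auto
  then show ?thesis
    using card_mono[of "{1..F}"] by fastforce
qed

lemma card_splitvars_restrict_less:
  assumes "f \<in> splitvars F x I"
  shows "card (splitvars F x (restrict_f x I f k)) < card (splitvars F x I)"
proof -
  have "splitvars F x (restrict_f x I f k) \<subset> splitvars F x I"
    using assms unfolding splitvars_def restrict_f_def by auto
  then show ?thesis
    by (simp add: finite_splitvars psubset_card_mono)
qed

lemma valid_tree_nonempty: "valid_tree F x I T \<Longrightarrow> I \<noteq> {}"
  by (cases T) auto

lemma valid_tree_split_feature:
  assumes "valid_tree F x I (Node f t0 t1)"
  shows "f \<in> splitvars F x I"
  using assms valid_tree_nonempty[of F x _ t0] valid_tree_nonempty[of F x _ t1]
  by (auto simp: splitvars_def)

lemma OrN_in_sgraph: "OrN I d \<in> sgraph x I d T"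
  by (cases T) auto

lemma sgraph_node_bounds:
  assumes "valid_tree F x I T" and "v \<in> sgraph x I d T"
  shows "node_index v \<subseteq> I \<and> node_index v \<noteq> {} \<and> d \<le> node_depth v"
  using assms
proof (induction T arbitrary: I d)
  case Leaf
  then show ?case by auto
next
  case (Node f t0 t1)
  then show ?case
    using Node.IH[of _ "d + 1"] restrict_f_subset[of x I f] by fastforce
qed

lemma sgraph_Node_at_depth:
  assumes "valid_tree F x I (Node f t0 t1)" and "v \<in> sgraph x I d (Node f t0 t1)"
    and "node_depth v = d"
  shows "v = OrN I d \<or> v = AndN I d f"
  using assms sgraph_node_bounds[of F x "restrict_f x I f _" _ v "d + 1"] by force

lemma ao_edge_node_bounds:
  "ao_edge N F x u v \<Longrightarrow> node_index v \<subseteq> node_index u \<and> node_depth u \<le> node_depth v"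
  by (cases u; cases v) (auto simp: restrict_f_def)

lemma finite_tree_edges: "finite (tree_edges x I d T)"
  by (induction T arbitrary: I d) auto

lemma tree_edges_subset_sgraph:
  "(u, v) \<in> tree_edges x I d T \<Longrightarrow> u \<in> sgraph x I d T \<and> v \<in> sgraph x I d T"
  by (induction T arbitrary: I d) (auto simp: OrN_in_sgraph)

lemma tree_edges_reachable:
  "(u, v) \<in> tree_edges x I d T \<Longrightarrow> (OrN I d, u) \<in> (tree_edges x I d T)\<^sup>*"
proof (induction T arbitrary: I d)
  case Leaf
  then show ?case by simp
next
  case (Node f t0 t1)
  let ?E = "tree_edges x I d (Node f t0 t1)"
  have child: "(OrN I d, OrN (restrict_f x I f k) (d + 1)) \<in> ?E\<^sup>*" for k
  proof -
    have "(OrN I d, AndN I d f) \<in> ?E" and "(AndN I d f, OrN (restrict_f x I f k) (d + 1)) \<in> ?E"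
      by (cases k; simp)+
    then show ?thesis
      by (meson converse_rtrancl_into_rtrancl r_into_rtrancl)
  qed
  have "(OrN (restrict_f x I f False) (d + 1), u) \<in> ?E\<^sup>*"
    if "(u, v) \<in> tree_edges x (restrict_f x I f False) (d + 1) t0"
    using Node.IH(1)[OF that] rtrancl_mono[of _ ?E] by auto
  moreover have "(OrN (restrict_f x I f True) (d + 1), u) \<in> ?E\<^sup>*"
    if "(u, v) \<in> tree_edges x (restrict_f x I f True) (d + 1) t1"
    using Node.IH(2)[OF that] rtrancl_mono[of _ ?E] by auto
  ultimately show ?case
    using Node.prems child by (auto intro: rtrancl_trans)
qed

text \<open>The depth bound \<open>d < F\<close> of an AND node follows because every split removes its feature
  from the candidate features of both children.\<close>

lemma tree_edges_are_ao_edges: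
  assumes "valid_tree F x I T" and "I \<subseteq> {1..N}" and "card (splitvars F x I) + d \<le> F"
    and "(u, v) \<in> tree_edges x I d T"
  shows "ao_edge N F x u v"
  using assms
proof (induction T arbitrary: I d)
  case Leaf
  then show ?case by auto
next
  case (Node f t0 t1)
  have f: "f \<in> splitvars F x I"
    using Node.prems(1) by (rule valid_tree_split_feature)
  then have "d < F"
    using Node.prems(3) card_gt_0_iff[of "splitvars F x I"] finite_splitvars by fastforce
  have card_child: "card (splitvars F x (restrict_f x I f k)) + (d + 1) \<le> F" for k
    using card_splitvars_restrict_less[OF f, of k] Node.prems(3) by linarith
  have index_child: "restrict_f x I f k \<subseteq> {1..N}" for k
    using restrict_f_subset Node.prems(2) by blast
  have "ao_edge N F x u v"
    if "(u, v) \<in> {(OrN I d, AndN I d f), (AndN I d f, OrN (restrict_f x I f False) (d + 1)),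
      (AndN I d f, OrN (restrict_f x I f True) (d + 1))}"
    using that Node.prems(2) valid_tree_nonempty[OF Node.prems(1)] f \<open>d < F\<close> by auto
  moreover have "ao_edge N F x u v" if "(u, v) \<in> tree_edges x (restrict_f x I f False) (d + 1) t0"
    using Node.IH(1)[OF _ index_child card_child that] Node.prems(1) by simp
  moreover have "ao_edge N F x u v" if "(u, v) \<in> tree_edges x (restrict_f x I f True) (d + 1) t1"
    using Node.IH(2)[OF _ index_child card_child that] Node.prems(1) by simp
  ultimately show ?case
    using Node.prems(4) unfolding tree_edges.simps Un_iff by blast
qed

lemma ao_edge_between_disjoint_sgraphs:
  assumes "valid_tree F x J t" and "valid_tree F x J' t'" and "J \<inter> J' = {}"
    and "u \<in> sgraph x J d t" and "v \<in> sgraph x J' d' t'"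
  shows "\<not> ao_edge N F x u v"
proof
  assume "ao_edge N F x u v"
  then have "node_index v \<subseteq> J \<inter> J'"
    using sgraph_node_bounds[OF assms(1,4)] sgraph_node_bounds[OF assms(2,5)] ao_edge_node_bounds
    by blast
  moreover have "node_index v \<noteq> {}"
    using sgraph_node_bounds[OF assms(2,5)] by blast
  ultimately show False
    using assms(3) by blast
qed

lemma top_ao_edge_within_sgraph_is_tree_edge:
  assumes "valid_tree F x I (Node f t0 t1)"
    and "u \<in> sgraph x I d (Node f t0 t1)" and "v \<in> sgraph x I d (Node f t0 t1)"
    and "ao_edge N F x u v" and "node_depth u = d"
  shows "(u, v) \<in> tree_edges x I d (Node f t0 t1)"
proof -
  note at_depth = sgraph_Node_at_depth[OF assms(1)]
  consider "u = OrN I d" | "u = AndN I d f"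
    using at_depth[OF assms(2,5)] by blast
  then show ?thesis
  proof cases
    case 1
    then have "node_depth v = d" and "v \<noteq> OrN I d"
      using assms(4) by (cases v; auto)+
    then have "v = AndN I d f"
      using at_depth[OF assms(3)] by blast
    then show ?thesis
      using 1 by simp
  next
    case 2
    then show ?thesis
      using assms(4) by (cases v) auto
  qed
qed

lemma ao_edge_within_sgraph_is_tree_edge:
  assumes "valid_tree F x I T" and "u \<in> sgraph x I d T" and "v \<in> sgraph x I d T"
    and "ao_edge N F x u v"
  shows "(u, v) \<in> tree_edges x I d T"
  using assms
proof (induction T arbitrary: I d)
  case Leaf
  then show ?case by auto
next
  case (Node f t0 t1)
  define I0 I1 where "I0 = restrict_f x I f False" and "I1 = restrict_f x I f True"
  have valid: "valid_tree F x I0 t0" "valid_tree F x I1 t1"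
    using Node.prems(1) by (auto simp: I0_def I1_def)
  show ?case
  proof (cases "node_depth u = d")
    case True
    with Node.prems show ?thesis
      by (rule top_ao_edge_within_sgraph_is_tree_edge)
  next
    case False
    then have "node_depth u > d" "node_depth v > d"
      using sgraph_node_bounds[OF Node.prems(1,2)] ao_edge_node_bounds[OF Node.prems(4)] by auto
    then have "u \<in> sgraph x I0 (d + 1) t0 \<union> sgraph x I1 (d + 1) t1"
      and "v \<in> sgraph x I0 (d + 1) t0 \<union> sgraph x I1 (d + 1) t1"
      using Node.prems(2,3) by (auto simp: I0_def I1_def)
    moreover have "I0 \<inter> I1 = {}" and "I1 \<inter> I0 = {}"
      unfolding I0_def I1_def using restrict_f_disjoint by blast+
    then have "\<not> (u \<in> sgraph x I0 (d + 1) t0 \<and> v \<in> sgraph x I1 (d + 1) t1)"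
      and "\<not> (u \<in> sgraph x I1 (d + 1) t1 \<and> v \<in> sgraph x I0 (d + 1) t0)"
      using ao_edge_between_disjoint_sgraphs[OF valid] ao_edge_between_disjoint_sgraphs[OF valid(2,1)]
        Node.prems(4) by blast+
    ultimately consider
        "u \<in> sgraph x I0 (d + 1) t0" "v \<in> sgraph x I0 (d + 1) t0"
      | "u \<in> sgraph x I1 (d + 1) t1" "v \<in> sgraph x I1 (d + 1) t1"
      by blast
    then show ?thesis
    proof cases
      case 1
      then have "(u, v) \<in> tree_edges x I0 (d + 1) t0"
        using Node.IH(1)[OF valid(1) _ _ Node.prems(4)] by blast
      then show ?thesis
        by (simp add: I0_def)
    next
      case 2
      then have "(u, v) \<in> tree_edges x I1 (d + 1) t1"
        using Node.IH(2)[OF valid(2) _ _ Node.prems(4)] by blast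
      then show ?thesis
        by (simp add: I1_def)
    qed
  qed
qed

lemma G_edges_within_sgraph:
  assumes "valid_tree F x {1..N} T"
  shows "{(u, v). u \<in> sgraph x {1..N} 0 T \<and> v \<in> sgraph x {1..N} 0 T \<and> G_edge N F x u v}
    = tree_edges x {1..N} 0 T"
proof -
  let ?E = "tree_edges x {1..N} 0 T"
  have ao_edges: "?E \<subseteq> {(u, v). ao_edge N F x u v}"
    using tree_edges_are_ao_edges[OF assms order_refl, where d = 0] card_splitvars_le by auto
  have "(ao_root N, u) \<in> {(u, v). ao_edge N F x u v}\<^sup>*" if "(u, v) \<in> ?E" for u v
    using tree_edges_reachable[OF that] rtrancl_mono[OF ao_edges] by (auto simp: ao_root_def)
  then show ?thesis
    using ao_edges tree_edges_subset_sgraph ao_edge_within_sgraph_is_tree_edge[OF assms]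
    unfolding G_edge_def by blast
qed

lemma neglog_mult: "a > 0 \<Longrightarrow> b > 0 \<Longrightarrow> neglog (a * b) = neglog a + neglog b"
  by (simp add: neglog_def ln_mult)

lemma neglog_le_neglog_iff: "a > 0 \<Longrightarrow> b > 0 \<Longrightarrow> neglog a \<le> neglog b \<longleftrightarrow> b \<le> a"
  by (simp add: neglog_def)

lemma ell_leaf_pos: "rho1 > 0 \<Longrightarrow> rho0 > 0 \<Longrightarrow> ell_leaf rho1 rho0 c1 c0 > 0"
  unfolding ell_leaf_def Beta_def by (simp add: add_pos_nonneg)

lemma p_split_less_1:
  assumes "\<alpha> < 1" and "\<beta> \<ge> 0"
  shows "p_split \<alpha> \<beta> d < 1"
proof -
  have "(1 + real d) powr (- \<beta>) \<le> 1"
    using assms(2) by (simp add: powr_minus inverse_le_1_iff ge_one_powr_ge_zero)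
  then have "\<alpha> * (1 + real d) powr (- \<beta>) \<le> max \<alpha> 0"
    by (simp add: max_def mult_left_le mult_nonpos_nonneg)
  then show ?thesis
    using assms(1) by (simp add: p_split_def)
qed

lemma p_leaf_pos: "\<alpha> < 1 \<Longrightarrow> \<beta> \<ge> 0 \<Longrightarrow> p_leaf F x \<alpha> \<beta> d I > 0"
  using p_split_less_1 by (simp add: p_leaf_def)

lemma p_inner_pos:
  assumes "0 < \<alpha>" and "f \<in> splitvars F x I"
  shows "p_inner F x \<alpha> \<beta> d I > 0"
  using assms card_gt_0_iff[of "splitvars F x I"] finite_splitvars
  by (auto simp: p_inner_def p_split_def)

lemma tree_lik_pos:
  "rho1 > 0 \<Longrightarrow> rho0 > 0 \<Longrightarrow> tree_lik x y rho1 rho0 I T > 0"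
  by (induction T arbitrary: I) (simp_all add: ell_leaf_pos)

lemma tree_prior_pos:
  assumes "0 < \<alpha>" and "\<alpha> < 1" and "\<beta> \<ge> 0"
  shows "valid_tree F x I T \<Longrightarrow> tree_prior F x \<alpha> \<beta> I d T > 0"
proof (induction T arbitrary: I d)
  case Leaf
  then show ?case using p_leaf_pos assms(2,3) by simp
next
  case (Node f t0 t1)
  then show ?case
    using p_inner_pos[OF assms(1) valid_tree_split_feature[OF Node.prems]] by simp
qed

lemma sum_tree_edges_Node:
  fixes g :: "aonode \<times> aonode \<Rightarrow> 'a::comm_monoid_add"
  assumes "valid_tree F x I (Node f t0 t1)"
  defines "I0 \<equiv> restrict_f x I f False" and "I1 \<equiv> restrict_f x I f True"
  shows "sum g (tree_edges x I d (Node f t0 t1))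
    = sum g {(OrN I d, AndN I d f), (AndN I d f, OrN I0 (d + 1)), (AndN I d f, OrN I1 (d + 1))}
      + sum g (tree_edges x I0 (d + 1) t0) + sum g (tree_edges x I1 (d + 1) t1)"
proof -
  define A where "A = {(OrN I d, AndN I d f), (AndN I d f, OrN I0 (d + 1)), (AndN I d f, OrN I1 (d + 1))}"
  define B C where "B = tree_edges x I0 (d + 1) t0" and "C = tree_edges x I1 (d + 1) t1"
  have valid: "valid_tree F x I0 t0" "valid_tree F x I1 t1"
    using assms(1) by (auto simp: I0_def I1_def)
  have source_bounds: "node_index u \<subseteq> J \<and> node_index u \<noteq> {} \<and> d + 1 \<le> node_depth u"
    if "valid_tree F x J t" and "(u, v) \<in> tree_edges x J (d + 1) t" for J t u v
    using tree_edges_subset_sgraph[OF that(2)] sgraph_node_bounds[OF that(1)] by blast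
  have "I0 \<inter> I1 = {}"
    unfolding I0_def I1_def by (rule restrict_f_disjoint)
  then have "A \<inter> B = {}" "(A \<union> B) \<inter> C = {}"
    using source_bounds[OF valid(1)] source_bounds[OF valid(2)]
    unfolding A_def B_def C_def by fastforce+
  moreover have "finite A" "finite B" "finite C"
    by (simp_all add: A_def B_def C_def finite_tree_edges)
  moreover have "tree_edges x I d (Node f t0 t1) = A \<union> B \<union> C"
    by (simp add: A_def B_def C_def I0_def I1_def)
  ultimately have "sum g (tree_edges x I d (Node f t0 t1)) = sum g A + sum g B + sum g C"
    by (simp add: sum.union_disjoint)
  then show ?thesis
    by (simp only: A_def B_def C_def)
qed

lemma sum_tree_edges_cost:
  assumes "rho1 > 0" and "rho0 > 0" and "0 < \<alpha>" and "\<alpha> < 1" and "\<beta> \<ge> 0"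
    and "valid_tree F x I T"
  shows "(\<Sum>(u, v) \<in> tree_edges x I d T. ao_cost F x y rho1 rho0 \<alpha> \<beta> u v)
    = neglog (tree_lik x y rho1 rho0 I T * tree_prior F x \<alpha> \<beta> I d T)"
  using assms(6)
proof (induction T arbitrary: I d)
  case Leaf
  then show ?case
    using assms(1-5) ell_leaf_pos p_leaf_pos by (simp add: neglog_mult add.commute)
next
  case (Node f t0 t1)
  define I0 I1 where "I0 = restrict_f x I f False" and "I1 = restrict_f x I f True"
  let ?cost = "\<lambda>(u, v). ao_cost F x y rho1 rho0 \<alpha> \<beta> u v"
  let ?joint = "\<lambda>I d T. tree_lik x y rho1 rho0 I T * tree_prior F x \<alpha> \<beta> I d T"
  have valid: "valid_tree F x I0 t0" "valid_tree F x I1 t1"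
    using Node.prems by (auto simp: I0_def I1_def)
  have "sum ?cost {(AndN I d f, OrN I0 (d + 1)), (AndN I d f, OrN I1 (d + 1))} = 0"
    by (rule sum.neutral) auto
  then have "sum ?cost (tree_edges x I d (Node f t0 t1)) = neglog (p_inner F x \<alpha> \<beta> d I)
      + neglog (?joint I0 (d + 1) t0) + neglog (?joint I1 (d + 1) t1)"
    using sum_tree_edges_Node[OF Node.prems, of ?cost d] Node.IH valid by (simp add: I0_def I1_def)
  also have "\<dots> = neglog (?joint I d (Node f t0 t1))"
    using p_inner_pos[OF assms(3) valid_tree_split_feature[OF Node.prems]]
      tree_lik_pos[OF assms(1,2)] tree_prior_pos[OF assms(3-5)] valid
    by (simp add: I0_def I1_def neglog_mult mult_ac add_ac)
  finally show ?case .
qed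

lemma sg_cost_sgraph:
  assumes "rho1 > 0" and "rho0 > 0" and "0 < \<alpha>" and "\<alpha> < 1" and "\<beta> \<ge> 0"
    and "valid_tree F x {1..N} T"
  shows "sg_cost N F x y rho1 rho0 \<alpha> \<beta> (sgraph x {1..N} 0 T)
    = neglog (joint_prob N F x y rho1 rho0 \<alpha> \<beta> T)"
  unfolding sg_cost_def G_edges_within_sgraph[OF assms(6)] joint_prob_def
  using sum_tree_edges_cost[OF assms] .

lemma joint_prob_pos:
  assumes "rho1 > 0" and "rho0 > 0" and "0 < \<alpha>" and "\<alpha> < 1" and "\<beta> \<ge> 0"
    and "valid_tree F x {1..N} T"
  shows "joint_prob N F x y rho1 rho0 \<alpha> \<beta> T > 0"
  using tree_lik_pos[OF assms(1,2)] tree_prior_pos[OF assms(3-6)] by (simp add: joint_prob_def)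

theorem theorem6:
  fixes N F :: nat and x :: "nat \<Rightarrow> nat \<Rightarrow> bool" and y :: "nat \<Rightarrow> bool"
    and rho1 rho0 \<alpha> \<beta> :: real
  assumes "rho1 > 0" and "rho0 > 0" and "0 < \<alpha>" and "\<alpha> < 1" and "\<beta> \<ge> 0"
  shows "(\<forall>T. valid_tree F x {1..N} T \<longrightarrow>
            sg_cost N F x y rho1 rho0 \<alpha> \<beta> (sgraph x {1..N} 0 T)
              = neglog (joint_prob N F x y rho1 rho0 \<alpha> \<beta> T))
       \<and> (\<forall>T0. valid_tree F x {1..N} T0 \<longrightarrow>
            ((\<forall>T. valid_tree F x {1..N} T \<longrightarrow>
                sg_cost N F x y rho1 rho0 \<alpha> \<beta> (sgraph x {1..N} 0 T0)
                  \<le> sg_cost N F x y rho1 rho0 \<alpha> \<beta> (sgraph x {1..N} 0 T))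
             \<longleftrightarrow>
             (\<forall>T. valid_tree F x {1..N} T \<longrightarrow>
                joint_prob N F x y rho1 rho0 \<alpha> \<beta> T \<le> joint_prob N F x y rho1 rho0 \<alpha> \<beta> T0)))"
proof (intro conjI allI impI)
  show "sg_cost N F x y rho1 rho0 \<alpha> \<beta> (sgraph x {1..N} 0 T)
      = neglog (joint_prob N F x y rho1 rho0 \<alpha> \<beta> T)" if "valid_tree F x {1..N} T" for T
    using sg_cost_sgraph[OF assms that] .
next
  fix T0
  assume "valid_tree F x {1..N} T0"
  then have "sg_cost N F x y rho1 rho0 \<alpha> \<beta> (sgraph x {1..N} 0 T0)
        \<le> sg_cost N F x y rho1 rho0 \<alpha> \<beta> (sgraph x {1..N} 0 T)
      \<longleftrightarrow> joint_prob N F x y rho1 rho0 \<alpha> \<beta> T \<le> joint_prob N F x y rho1 rho0 \<alpha> \<beta> T0"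
    if "valid_tree F x {1..N} T" for T
    using that sg_cost_sgraph[OF assms] joint_prob_pos[OF assms] neglog_le_neglog_iff by metis
  then show "(\<forall>T. valid_tree F x {1..N} T \<longrightarrow>
        sg_cost N F x y rho1 rho0 \<alpha> \<beta> (sgraph x {1..N} 0 T0)
          \<le> sg_cost N F x y rho1 rho0 \<alpha> \<beta> (sgraph x {1..N} 0 T))
      \<longleftrightarrow> (\<forall>T. valid_tree F x {1..N} T \<longrightarrow>
        joint_prob N F x y rho1 rho0 \<alpha> \<beta> T \<le> joint_prob N F x y rho1 rho0 \<alpha> \<beta> T0)"
    by blast
qed

end
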